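(* Let $(V_i)_{i\ge1}$ be real-valued random variables such that $\mu(0,x):=\mathbb{E}\sum_i\mathbf{1}_{\{0<V_i<x\}}$ satisfies $\limsup_{x\downarrow0}\mu(0,x)/x<\infty$. Then there exist $\beta>0$ and $s_0>0$ such that for every sequence of events $A_i\subseteq\{V_i>0\}$ with $s:=\sum_i\mathbb{P}(A_i)\le s_0$, \[ \mathbb{E}\sum_i V_i\mathbf{1}_{A_i}\ \ge\ \beta s^2 . \] *)

theory Defs
  imports "HOL-Probability.Probability"
begin

definition mu_int :: "'a measure \<Rightarrow> (nat \<Rightarrow> 'a \<Rightarrow> real) \<Rightarrow> real \<Rightarrow> ennreal" where
  "mu_int M V x = (\<integral>\<^sup>+ \<omega>. (\<Sum>i. indicator {\<omega>. 0 < V i \<omega> \<and> V i \<omega> < x} \<omega>) \<partial>M)"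

end

theory Submission
  imports Defs
begin

text \<open>Pointwise, each event A i inside {V i > 0} splits into the part where V i \<ge> x and the
  part where 0 < V i < x; integrating gives x s \<le> E (\<Sum>i. V i 1(A i)) + x mu(0,x). The growth
  condition gives mu(0,x) \<le> c x for small x, and the choice x = s / (2 c) yields the lower
  bound s^2 / (4 c).\<close>

lemma linear_bound_at_right_0_of_Limsup:
  fixes f :: "real \<Rightarrow> ennreal"
  assumes "Limsup (at_right 0) (\<lambda>x. f x / ennreal x) < \<top>"
  obtains c \<delta> :: real where "c > 0" "\<delta> > 0" "\<And>x. 0 < x \<Longrightarrow> x < \<delta> \<Longrightarrow> f x \<le> ennreal (c * x)"
proof -
  obtain n :: nat where "Limsup (at_right 0) (\<lambda>x. f x / ennreal x) < of_nat n"
    using ennreal_Ex_less_of_nat[OF assms] by blast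
  also have "of_nat n < ennreal (real n + 1)"
    by (metis ennreal_of_nat_eq_real_of_nat ennreal_less_iff less_add_one of_nat_0_le_iff)
  finally obtain \<delta> :: real where "\<delta> > 0"
    and ratio: "\<And>x. 0 < x \<Longrightarrow> x < \<delta> \<Longrightarrow> f x / ennreal x < ennreal (real n + 1)"
    by (auto dest!: Limsup_lessD simp: eventually_at_right_field)
  have "f x \<le> ennreal ((real n + 1) * x)" if "0 < x" "x < \<delta>" for x
  proof -
    have "f x = f x / ennreal x * ennreal x"
      using \<open>0 < x\<close> by (simp add: ennreal_divide_times ennreal_divide_self)
    also have "\<dots> \<le> ennreal (real n + 1) * ennreal x"
      using ratio[OF that] by (intro mult_right_mono) auto
    finally show ?thesis
      using \<open>0 < x\<close> by (simp add: ennreal_mult)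
  qed
  with \<open>\<delta> > 0\<close> show thesis
    by (intro that[of "real n + 1" \<delta>]) auto
qed

lemma borel_measurable_indicator_between:
  fixes f :: "'a \<Rightarrow> real"
  assumes "f \<in> borel_measurable M"
  shows "(\<lambda>\<omega>. indicator {\<omega>. 0 < f \<omega> \<and> f \<omega> < x} \<omega> :: ennreal) \<in> borel_measurable M"
proof -
  have "{\<omega>. 0 < f \<omega> \<and> f \<omega> < x} \<inter> space M = {\<omega> \<in> space M. 0 < f \<omega> \<and> f \<omega> < x}"
    by auto
  also have "\<dots> \<in> sets M"
    using assms by measurable
  finally show ?thesis
    by (subst borel_measurable_indicator_iff)
qed

lemma ennreal_le_plus_indicator_below:
  assumes "0 < v"
  shows "ennreal x \<le> ennreal v + ennreal x * indicator {y. 0 < y \<and> y < x} v"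
  using assms by (cases "v < x") (auto intro: add_increasing2 add_increasing)

lemma scaled_emeasure_sum_le_mean_plus_mu_int:
  fixes V :: "nat \<Rightarrow> 'a \<Rightarrow> real"
  assumes V: "\<And>i. V i \<in> borel_measurable M"
    and A: "\<And>i. A i \<in> sets M" "\<And>i. A i \<subseteq> {\<omega> \<in> space M. V i \<omega> > 0}"
  shows "ennreal x * (\<Sum>i. emeasure M (A i))
    \<le> (\<integral>\<^sup>+ \<omega>. (\<Sum>i. ennreal (V i \<omega> * indicator (A i) \<omega>)) \<partial>M) + ennreal x * mu_int M V x"
proof -
  let ?low = "\<lambda>i \<omega>. indicator {\<omega>. 0 < V i \<omega> \<and> V i \<omega> < x} \<omega> :: ennreal"
  have meas_A: "(\<lambda>\<omega>. indicator (A i) \<omega> :: ennreal) \<in> borel_measurable M" for i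
    using A by simp
  have meas_VA: "(\<lambda>\<omega>. ennreal (V i \<omega> * indicator (A i) \<omega>)) \<in> borel_measurable M" for i
    using V A by measurable
  have pointwise: "ennreal x * indicator (A i) \<omega> \<le> ennreal (V i \<omega> * indicator (A i) \<omega>) + ennreal x * ?low i \<omega>"
    for i \<omega>
    using A(2)[of i] ennreal_le_plus_indicator_below[of "V i \<omega>" x]
    by (cases "\<omega> \<in> A i") (auto simp: indicator_def)
  have "ennreal x * (\<Sum>i. emeasure M (A i)) = ennreal x * (\<integral>\<^sup>+\<omega>. (\<Sum>i. indicator (A i) \<omega>) \<partial>M)"
    using A(1) meas_A by (simp add: nn_integral_suminf)
  also have "\<dots> = (\<integral>\<^sup>+\<omega>. ennreal x * (\<Sum>i. indicator (A i) \<omega>) \<partial>M)"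
    using meas_A by (simp add: nn_integral_cmult borel_measurable_suminf_order)
  also have "\<dots> \<le> (\<integral>\<^sup>+\<omega>. (\<Sum>i. ennreal (V i \<omega> * indicator (A i) \<omega>)) + ennreal x * (\<Sum>i. ?low i \<omega>) \<partial>M)"
  proof (intro nn_integral_mono)
    fix \<omega>
    have "ennreal x * (\<Sum>i. indicator (A i) \<omega>) = (\<Sum>i. ennreal x * indicator (A i) \<omega>)"
      by simp
    also have "\<dots> \<le> (\<Sum>i. ennreal (V i \<omega> * indicator (A i) \<omega>) + ennreal x * ?low i \<omega>)"
      by (intro suminf_le pointwise summableI)
    also have "\<dots> = (\<Sum>i. ennreal (V i \<omega> * indicator (A i) \<omega>)) + ennreal x * (\<Sum>i. ?low i \<omega>)"
      by (simp add: suminf_add[symmetric])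
    finally show "ennreal x * (\<Sum>i. indicator (A i) \<omega>)
        \<le> (\<Sum>i. ennreal (V i \<omega> * indicator (A i) \<omega>)) + ennreal x * (\<Sum>i. ?low i \<omega>)" .
  qed
  also have "\<dots> = (\<integral>\<^sup>+ \<omega>. (\<Sum>i. ennreal (V i \<omega> * indicator (A i) \<omega>)) \<partial>M) + ennreal x * mu_int M V x"
    unfolding mu_int_def using borel_measurable_indicator_between[OF V] meas_VA
    by (simp add: nn_integral_add nn_integral_cmult borel_measurable_suminf_order)
  finally show ?thesis .
qed

lemma ennreal_quadratic_lower_bound:
  fixes c s x :: real
  assumes "c > 0" "x = s / (2 * c)" "ennreal (x * s) \<le> I + ennreal (c * x\<^sup>2)"
  shows "ennreal (s\<^sup>2 / (4 * c)) \<le> I"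
proof (cases I)
  case (real r)
  then have "x * s \<le> r + c * x\<^sup>2"
    using assms(3) \<open>c > 0\<close> by (simp add: ennreal_plus[symmetric] del: ennreal_plus)
  then have "s\<^sup>2 / (4 * c) \<le> r"
    using assms(1,2) by (simp add: field_simps power2_eq_square)
  then show ?thesis
    using real by simp
qed simp

theorem mainTheorem5:
  fixes M :: "'a measure" and V :: "nat \<Rightarrow> 'a \<Rightarrow> real"
  assumes "prob_space M"
    and "\<And>i. V i \<in> borel_measurable M"
    and "Limsup (at_right 0) (\<lambda>x. mu_int M V x / ennreal x) < \<top>"
  shows "\<exists>\<beta>::real. \<exists>s0::real. \<beta> > 0 \<and> s0 > 0 \<and>
    (\<forall>A :: nat \<Rightarrow> 'a set.
       (\<forall>i. A i \<in> sets M \<and> A i \<subseteq> {\<omega> \<in> space M. V i \<omega> > 0}) \<longrightarrow>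
       (\<Sum>i. emeasure M (A i)) \<le> ennreal s0 \<longrightarrow>
       (\<integral>\<^sup>+ \<omega>. (\<Sum>i. ennreal (V i \<omega> * indicator (A i) \<omega>)) \<partial>M)
         \<ge> ennreal \<beta> * (\<Sum>i. emeasure M (A i))\<^sup>2)"
proof -
  obtain c \<delta> :: real where "c > 0" "\<delta> > 0"
    and mu_le: "\<And>x. 0 < x \<Longrightarrow> x < \<delta> \<Longrightarrow> mu_int M V x \<le> ennreal (c * x)"
    using linear_bound_at_right_0_of_Limsup[OF assms(3)] by blast
  show ?thesis
  proof (rule exI[of _ "1 / (4 * c)"], rule exI[of _ "c * \<delta>"], intro conjI allI impI)
    fix A :: "nat \<Rightarrow> 'a set"
    assume A: "\<forall>i. A i \<in> sets M \<and> A i \<subseteq> {\<omega> \<in> space M. V i \<omega> > 0}"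
      and small: "(\<Sum>i. emeasure M (A i)) \<le> ennreal (c * \<delta>)"
    then obtain s where s: "(\<Sum>i. emeasure M (A i)) = ennreal s" "0 \<le> s" "s \<le> c * \<delta>"
      using \<open>c > 0\<close> \<open>\<delta> > 0\<close> by (cases "\<Sum>i. emeasure M (A i)") (auto simp: top_unique)
    define x where "x = s / (2 * c)"
    let ?I = "\<integral>\<^sup>+ \<omega>. (\<Sum>i. ennreal (V i \<omega> * indicator (A i) \<omega>)) \<partial>M"
    have "ennreal (x * s) = ennreal x * (\<Sum>i. emeasure M (A i))"
      using s(1,2) \<open>c > 0\<close> by (subst ennreal_mult) (auto simp: x_def)
    also have "\<dots> \<le> ?I + ennreal x * mu_int M V x"
      using A by (intro scaled_emeasure_sum_le_mean_plus_mu_int assms(2)) auto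
    also have "\<dots> \<le> ?I + ennreal (c * x\<^sup>2)"
    proof (cases "s = 0")
      case False
      then have "0 < x" "x < \<delta>"
        using s \<open>c > 0\<close> \<open>\<delta> > 0\<close> by (auto simp: x_def field_simps)
      then have "ennreal x * mu_int M V x \<le> ennreal x * ennreal (c * x)"
        using mu_le by (intro mult_left_mono) auto
      also have "\<dots> = ennreal (c * x\<^sup>2)"
        using \<open>0 < x\<close> \<open>c > 0\<close> by (simp add: ennreal_mult[symmetric] power2_eq_square mult_ac)
      finally show ?thesis
        by (rule add_left_mono)
    qed (simp add: x_def)
    finally have "ennreal (s\<^sup>2 / (4 * c)) \<le> ?I"
      using ennreal_quadratic_lower_bound[OF \<open>c > 0\<close> x_def] by blast
    then show "ennreal (1 / (4 * c)) * (\<Sum>i. emeasure M (A i))\<^sup>2 \<le> ?I"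
      using s(1,2) \<open>c > 0\<close> by (simp add: ennreal_mult[symmetric] ennreal_power)
  qed (use \<open>c > 0\<close> \<open>\<delta> > 0\<close> in auto)
qed

end
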